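(* Let $K/\mathbb{Q}_p$ be a finite extension with ring of integers $A$, uniformizer $\pi$ and ramification index $e$, and suppose $\log_p\frac{e}{p-1}$ is not an integer. Let $n$ be a positive integer and let $I_n$ be the ideal of $A$ generated by all $a^n-1$ with $a\in A$, $a\equiv1\bmod\pi$. Then $A/I_n\cong A/\pi^i$, where $i=e\big(\nu_p(n)-\lceil\log_p\frac{e}{p-1}\rceil\big)+p^{\lceil\log_p\frac{e}{p-1}\rceil}$ if $\lceil\log_p\frac{e}{p-1}\rceil\le\nu_p(n)$, and $i=p^{\nu_p(n)}$ if $\lceil\log_p\frac{e}{p-1}\rceil>\nu_p(n)$.
   Context: $\nu_p$ denotes the $p$-adic valuation. *)

theory Defs
  imports Complex_Main "HOL-Algebra.QuotRing" "HOL-Computational_Algebra.Primes"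
begin

definition type_ring :: "('a::comm_ring_1) ring" where
  "type_ring = \<lparr>carrier = UNIV, monoid.mult = (*), one = 1, zero = 0, add = (+)\<rparr>"

definition dvr_uniformizer :: "'a::idom \<Rightarrow> bool" where
  "dvr_uniformizer \<pi> \<longleftrightarrow> \<pi> \<noteq> 0 \<and> \<not> \<pi> dvd 1 \<and>
     (\<forall>x. x \<noteq> 0 \<longrightarrow> (\<exists>u k. u dvd 1 \<and> x = u * \<pi> ^ k))"

text \<open>pi-adic completeness: every pi-adically Cauchy sequence (in the normalized form
  x (n+1) = x n mod pi^n) has a limit.\<close>
definition pi_adically_complete :: "'a::comm_ring_1 \<Rightarrow> bool" where
  "pi_adically_complete \<pi> \<longleftrightarrow>
     (\<forall>x :: nat \<Rightarrow> 'a. (\<forall>n. \<pi> ^ n dvd (x (Suc n) - x n)) \<longrightarrow>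
        (\<exists>y. \<forall>n. \<pi> ^ n dvd (y - x n)))"

definition finite_residue_field :: "'a::comm_ring_1 \<Rightarrow> bool" where
  "finite_residue_field \<pi> \<longleftrightarrow> finite (range (\<lambda>a. {b. \<pi> dvd (b - a)}))"

definition I_ideal :: "'a::comm_ring_1 \<Rightarrow> nat \<Rightarrow> 'a set" where
  "I_ideal \<pi> n = genideal type_ring {a ^ n - 1 | a. \<pi> dvd (a - 1)}"

end

theory Submission
  imports Defs
begin

text \<open>For \<open>a \<equiv> 1 (mod \<pi>)\<close> put \<open>y = a ^ p ^ k - 1\<close>. Then
  \<open>a ^ p ^ (k + 1) - 1 = (1 + y) ^ p - 1 = p y + y ^ p + p y\<^sup>2 z\<close>, and since \<open>p\<close> has
  valuation \<open>e\<close>, the valuation of \<open>a ^ p ^ k - 1\<close> is at least \<open>pi_level p e k\<close>, where the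
  level starts at 1 and moves from \<open>t\<close> to \<open>min (p t) (e + t)\<close>. For \<open>a = 1 + \<pi>\<close> this is an
  equality as long as the two candidates for the minimum never coincide, which is exactly what
  the hypothesis that \<open>log\<^sub>p (e / (p - 1))\<close> is not an integer guarantees. Writing
  \<open>n = p ^ v * m\<close> with \<open>p \<nmid> m\<close>, the cofactor \<open>1 + b + \<dots> + b ^ (m - 1) \<equiv> m (mod \<pi>)\<close>
  of \<open>b ^ m - 1\<close> is a unit, so \<open>I\<^sub>n = (\<pi> ^ pi_level p e v)\<close>; solving the recursion for the
  level gives the stated exponent.\<close>

lemma cring_type_ring: "cring (type_ring :: 'a::comm_ring_1 ring)"
proof (rule cringI)
  show "abelian_group (type_ring :: 'a ring)"
    by (rule abelian_groupI) (auto simp: type_ring_def algebra_simps intro: exI[of _ "- _"])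
  show "comm_monoid (type_ring :: 'a ring)"
    by (rule comm_monoidI) (auto simp: type_ring_def algebra_simps)
qed (auto simp: type_ring_def algebra_simps)

lemma genideal_type_ring_singleton:
  "genideal type_ring {x} = {y :: 'a::comm_ring_1. x dvd y}"
proof -
  interpret cring "type_ring :: 'a ring" by (rule cring_type_ring)
  have "genideal type_ring {x} = cgenideal type_ring x"
    by (rule cgenideal_eq_genideal[symmetric]) (simp add: type_ring_def)
  thus ?thesis by (auto simp: cgenideal_def type_ring_def dvd_def mult.commute)
qed

lemma genideal_type_ring_eq_principal:
  fixes x :: "'a::comm_ring_1"
  assumes "\<And>s. s \<in> S \<Longrightarrow> x dvd s" and "s\<^sub>0 \<in> S" and "s\<^sub>0 dvd x"
  shows "genideal type_ring S = genideal type_ring {x}"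
proof
  interpret cring "type_ring :: 'a ring" by (rule cring_type_ring)
  have carrier: "carrier (type_ring :: 'a ring) = UNIV" by (simp add: type_ring_def)
  show "genideal type_ring S \<subseteq> genideal type_ring {x}"
    using assms(1) by (intro genideal_minimal genideal_ideal)
      (auto simp: carrier genideal_type_ring_singleton)
  have ideal_S: "ideal (genideal type_ring S) type_ring"
    by (rule genideal_ideal) (simp add: carrier)
  obtain k where "x = s\<^sub>0 * k" using assms(3) by blast
  moreover have "s\<^sub>0 \<in> genideal type_ring S"
    using assms(2) genideal_self[of S] by (auto simp: carrier)
  ultimately have "x \<in> genideal type_ring S"
    using ideal.I_r_closed[OF ideal_S] by (simp add: carrier type_ring_def)
  thus "genideal type_ring {x} \<subseteq> genideal type_ring S"
    using ideal_S by (intro genideal_minimal) auto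
qed

lemma one_plus_power_prime:
  fixes y :: "'a::comm_ring_1"
  assumes "prime p"
  obtains z where "(1 + y) ^ p - 1 = of_nat p * y + y ^ p + of_nat p * y\<^sup>2 * z"
proof -
  obtain q where q: "p = Suc (Suc q)"
    using prime_ge_2_nat[OF assms] by (metis add_2_eq_Suc le_iff_add)
  define f where "f k = of_nat (p choose k) * y ^ k" for k
  have "(1 + y) ^ p = (\<Sum>k\<le>p. f k)"
    unfolding f_def add.commute[of 1] binomial_ring by simp
  also have "\<dots> = (\<Sum>k<Suc (Suc q). f k) + f p"
    by (simp add: q sum.atMost_Suc lessThan_Suc_atMost[symmetric])
  also have "(\<Sum>k<Suc (Suc q). f k) = f 0 + f 1 + (\<Sum>k<q. f (Suc (Suc k)))"
    by (simp only: sum.lessThan_Suc_shift) (simp add: add.assoc)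
  finally have expand: "(1 + y) ^ p = f 0 + f 1 + (\<Sum>k<q. f (Suc (Suc k))) + f p" .
  define z where "z = (\<Sum>k<q. of_nat ((p choose Suc (Suc k)) div p) * y ^ k)"
  have "(\<Sum>k<q. f (Suc (Suc k))) = of_nat p * y\<^sup>2 * z"
    unfolding z_def sum_distrib_left
  proof (rule sum.cong[OF refl])
    fix k assume "k \<in> {..<q}"
    hence "p dvd (p choose Suc (Suc k))"
      using q assms by (intro dvd_choose_prime) auto
    hence "(of_nat (p choose Suc (Suc k)) :: 'a) = of_nat p * of_nat ((p choose Suc (Suc k)) div p)"
      by (metis dvd_mult_div_cancel of_nat_mult)
    thus "f (Suc (Suc k)) = of_nat p * y\<^sup>2 * (of_nat ((p choose Suc (Suc k)) div p) * y ^ k)"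
      unfolding f_def by (simp add: algebra_simps power2_eq_square)
  qed
  moreover have "f 0 = 1" "f 1 = of_nat p * y" "f p = y ^ p" by (auto simp: f_def)
  ultimately show ?thesis using expand that by (simp add: algebra_simps)
qed

lemma dvr_unit_iff_not_dvd:
  fixes \<pi> x :: "'a::idom"
  assumes "dvr_uniformizer \<pi>"
  shows "x dvd 1 \<longleftrightarrow> \<not> \<pi> dvd x"
proof
  show "x dvd 1 \<Longrightarrow> \<not> \<pi> dvd x"
    using assms dvd_trans unfolding dvr_uniformizer_def by blast
  assume "\<not> \<pi> dvd x"
  moreover from this have "x \<noteq> 0" by auto
  then obtain u k where "u dvd 1" "x = u * \<pi> ^ k"
    using assms unfolding dvr_uniformizer_def by blast
  ultimately show "x dvd 1" by (cases k) auto
qed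

lemma dvr_unit_add_multiple:
  fixes \<pi> u z :: "'a::idom"
  assumes "dvr_uniformizer \<pi>" and "u dvd 1"
  shows "(u + \<pi> * z) dvd 1"
  using assms by (simp add: dvr_unit_iff_not_dvd dvd_add_left_iff)

lemma dvr_unit_power_add:
  fixes \<pi> u v :: "'a::idom"
  assumes "dvr_uniformizer \<pi>" and "u dvd 1" and "a < b"
  obtains w where "w dvd 1" and "u * \<pi> ^ a + v * \<pi> ^ b = w * \<pi> ^ a"
proof -
  obtain d where "b = a + Suc d" using assms(3) less_iff_Suc_add by auto
  hence "u * \<pi> ^ a + v * \<pi> ^ b = (u + \<pi> * (v * \<pi> ^ d)) * \<pi> ^ a"
    by (simp add: power_add algebra_simps)
  thus ?thesis using that dvr_unit_add_multiple[OF assms(1,2)] by blast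
qed

lemma prime_power_minus_one_dvd:
  fixes \<pi> y :: "'a::comm_ring_1"
  assumes "prime p" and "\<pi> ^ e dvd of_nat p" and "\<pi> ^ t dvd y"
  shows "\<pi> ^ min (p * t) (e + t) dvd (1 + y) ^ p - 1"
proof -
  obtain z where z: "(1 + y) ^ p - 1 = of_nat p * y + y ^ p + of_nat p * y\<^sup>2 * z"
    using one_plus_power_prime[OF assms(1)] .
  have linear: "\<pi> ^ (e + t) dvd of_nat p * y"
    unfolding power_add using assms(2,3) by (rule mult_dvd_mono)
  hence "\<pi> ^ (e + t) dvd of_nat p * y\<^sup>2 * z"
    by (metis dvd_mult2 mult.assoc power2_eq_square)
  with linear have "\<pi> ^ min (p * t) (e + t) dvd of_nat p * y + of_nat p * y\<^sup>2 * z"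
    by (meson dvd_add dvd_trans le_imp_power_dvd min.cobounded2)
  moreover have "\<pi> ^ (p * t) dvd y ^ p"
    using dvd_power_same[OF assms(3)] by (simp add: power_mult[symmetric] mult.commute)
  hence "\<pi> ^ min (p * t) (e + t) dvd y ^ p"
    by (meson dvd_trans le_imp_power_dvd min.cobounded1)
  ultimately show ?thesis unfolding z by (metis add.commute add.left_commute dvd_add)
qed

lemma dvr_prime_power_minus_one_exact:
  fixes \<pi> u w :: "'a::idom"
  assumes "dvr_uniformizer \<pi>" and "prime p" and "of_nat p = u * \<pi> ^ e" and "u dvd 1"
    and "w dvd 1" and "t > 0" and "p * t \<noteq> e + t"
  obtains W where "W dvd 1" and "(1 + w * \<pi> ^ t) ^ p - 1 = W * \<pi> ^ min (p * t) (e + t)"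
proof -
  define y where "y = w * \<pi> ^ t"
  obtain z where z: "(1 + y) ^ p - 1 = of_nat p * y + y ^ p + of_nat p * y\<^sup>2 * z"
    using one_plus_power_prime[OF assms(2)] .
  obtain s where s: "t = Suc s" using assms(6) gr0_implies_Suc by blast
  define U where "U = u * w * (1 + \<pi> * (w * \<pi> ^ s * z))"
  have "(1 + \<pi> * (w * \<pi> ^ s * z)) dvd 1"
    by (rule dvr_unit_add_multiple[OF assms(1)]) simp
  hence "U dvd 1" unfolding U_def using assms(4,5) by (metis mult_dvd_mono mult_1_left)
  have "w ^ p dvd 1" using dvd_power_same[OF assms(5)] by simp
  have "of_nat p * y + y ^ p + of_nat p * y\<^sup>2 * z = U * \<pi> ^ (e + t) + w ^ p * \<pi> ^ (p * t)"
    unfolding U_def y_def assms(3) s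
    by (simp add: power_add power2_eq_square power_mult_distrib power_mult[symmetric] algebra_simps)
  with z have sum: "(1 + y) ^ p - 1 = U * \<pi> ^ (e + t) + w ^ p * \<pi> ^ (p * t)" by simp
  show ?thesis
  proof (cases "p * t < e + t")
    case True
    with dvr_unit_power_add[OF assms(1) \<open>w ^ p dvd 1\<close> this] sum show ?thesis
      by (metis add.commute min.strict_order_iff that y_def)
  next
    case False
    with assms(7) have "e + t < p * t" by simp
    with dvr_unit_power_add[OF assms(1) \<open>U dvd 1\<close> this] sum show ?thesis
      by (metis min.strict_order_iff min.commute that y_def)
  qed
qed

fun pi_level :: "nat \<Rightarrow> nat \<Rightarrow> nat \<Rightarrow> nat" where
  "pi_level p e 0 = 1"
| "pi_level p e (Suc k) = min (p * pi_level p e k) (e + pi_level p e k)"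

lemma pi_level_pos: "p > 0 \<Longrightarrow> pi_level p e k > 0"
  by (induction k) auto

lemma pi_level_dvd:
  fixes \<pi> x :: "'a::comm_ring_1"
  assumes "prime p" and "\<pi> ^ e dvd of_nat p" and "\<pi> dvd x"
  shows "\<pi> ^ pi_level p e k dvd (1 + x) ^ (p ^ k) - 1"
proof (induction k)
  case 0
  then show ?case using assms(3) by simp
next
  case (Suc k)
  then show ?case
    using prime_power_minus_one_dvd[OF assms(1,2) Suc]
    by (simp only: pi_level.simps power_Suc2 power_mult add.commute[of 1] diff_add_cancel)
qed

lemma dvr_pi_level_exact:
  fixes \<pi> u :: "'a::idom"
  assumes "dvr_uniformizer \<pi>" and "prime p" and "of_nat p = u * \<pi> ^ e" and "u dvd 1"
    and no_tie: "\<And>k. p * pi_level p e k \<noteq> e + pi_level p e k"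
  obtains w where "w dvd 1" and "(1 + \<pi>) ^ (p ^ k) - 1 = w * \<pi> ^ pi_level p e k"
proof (induction k arbitrary: thesis)
  case 0
  then show ?case using "0"[of 1] by simp
next
  case (Suc k)
  then obtain w where "w dvd 1" and w: "(1 + \<pi>) ^ (p ^ k) - 1 = w * \<pi> ^ pi_level p e k"
    by blast
  have "pi_level p e k > 0" using pi_level_pos prime_gt_0_nat[OF assms(2)] by blast
  from dvr_prime_power_minus_one_exact[OF assms(1-4) \<open>w dvd 1\<close> this no_tie] Suc.prems
  show ?case
    by (metis pi_level.simps(2) w power_Suc2 power_mult add.commute diff_add_cancel)
qed

lemma pi_level_closed_form:
  assumes "p \<ge> 2" and below: "\<And>k. k < c \<Longrightarrow> p ^ k * (p - 1) < e" and above: "e < p ^ c * (p - 1)"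
  shows "pi_level p e k = (if k \<le> c then p ^ k else p ^ c + e * (k - c))"
proof (induction k)
  case 0
  then show ?case by simp
next
  case (Suc k)
  have step: "pi_level p e (Suc k) = pi_level p e k + min (pi_level p e k * (p - 1)) e"
    using \<open>p \<ge> 2\<close> by (cases p) (auto simp: algebra_simps)
  show ?case
  proof (cases "Suc k \<le> c")
    case True
    then show ?thesis using Suc.IH below[of k] step by (simp add: algebra_simps)
  next
    case False
    then have level: "pi_level p e k = p ^ c + e * (k - c)"
      using Suc.IH by (cases "k = c") auto
    have "p ^ c * (p - 1) \<le> (p ^ c + e * (k - c)) * (p - 1)" by simp
    then have "e < pi_level p e k * (p - 1)" unfolding level using above by linarith
    then show ?thesis using False step level by (simp add: Suc_diff_le)
  qed
qed

lemma pi_level_no_tie: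
  assumes "p \<ge> 2" and below: "\<And>k. k < c \<Longrightarrow> p ^ k * (p - 1) < e" and above: "e < p ^ c * (p - 1)"
  shows "p * pi_level p e k \<noteq> e + pi_level p e k"
proof -
  have "pi_level p e k * (p - 1) \<noteq> e"
  proof (cases "k < c")
    case True
    then show ?thesis using below[OF True] pi_level_closed_form[OF assms, of k] by simp
  next
    case False
    then have "p ^ c \<le> pi_level p e k" using pi_level_closed_form[OF assms, of k] by auto
    then have "p ^ c * (p - 1) \<le> pi_level p e k * (p - 1)" by simp
    then show ?thesis using above by linarith
  qed
  then show ?thesis using \<open>p \<ge> 2\<close> by (cases p) (auto simp: algebra_simps)
qed

lemma ceiling_log_bounds:
  fixes p e :: nat
  assumes "p \<ge> 2" and "e > 0" and not_int: "log (real p) (real e / (real p - 1)) \<notin> \<int>"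
  defines "c \<equiv> \<lceil>log (real p) (real e / (real p - 1))\<rceil>"
  shows "c \<ge> 0" and "\<And>k. k < nat c \<Longrightarrow> p ^ k * (p - 1) < e" and "e < p ^ nat c * (p - 1)"
proof -
  define q where "q = real e / (real p - 1)"
  have c: "c = \<lceil>log (real p) q\<rceil>" unfolding c_def q_def ..
  have p1: "real p > 1" and q0: "q > 0" using assms(1,2) by (auto simp: q_def)
  have cast: "real (p ^ k * (p - 1)) = real p ^ k * (real p - 1)" for k
    using assms(1) by (simp add: of_nat_diff)
  have power_less_q: "real p ^ k < q \<longleftrightarrow> p ^ k * (p - 1) < e" for k
  proof -
    have "real p ^ k < q \<longleftrightarrow> real p ^ k * (real p - 1) < real e"
      using p1 by (simp add: q_def pos_less_divide_eq)
    also have "\<dots> \<longleftrightarrow> p ^ k * (p - 1) < e"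
      by (metis cast of_nat_less_iff)
    finally show ?thesis .
  qed
  have q_less_power: "q < real p ^ k \<longleftrightarrow> e < p ^ k * (p - 1)" for k
  proof -
    have "q < real p ^ k \<longleftrightarrow> real e < real p ^ k * (real p - 1)"
      using p1 by (simp add: q_def pos_divide_less_eq)
    also have "\<dots> \<longleftrightarrow> e < p ^ k * (p - 1)"
      by (metis cast of_nat_less_iff)
    finally show ?thesis .
  qed
  have "real p \<le> real e * real p" using assms(2) by (simp add: mult_le_cancel_right1)
  then have "real p - 1 < real e * real p" by linarith
  then have "real p powr -1 < q"
    using p1 by (simp add: q_def powr_minus divide_simps)
  then have "-1 < log (real p) q" using less_log_iff[OF p1 q0] by blast
  then show c0: "c \<ge> 0" unfolding c by linarith
  show "p ^ k * (p - 1) < e" if "k < nat c" for k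
  proof -
    have "int k < c" using that by linarith
    then have "real k < log (real p) q" unfolding c less_ceiling_iff by simp
    then show ?thesis using less_log_iff[OF p1 q0] p1 power_less_q by (simp add: powr_realpow)
  qed
  have "log (real p) q \<noteq> c" using not_int unfolding c q_def by (metis Ints_of_int)
  moreover have "log (real p) q \<le> c" unfolding c by (rule le_of_int_ceiling)
  ultimately have "log (real p) q < real (nat c)" using c0 by simp
  then show "e < p ^ nat c * (p - 1)" using log_less_iff[OF p1 q0] p1 q_less_power by (simp add: powr_realpow)
qed

lemma not_dvd_of_nat_if_prime_not_dvd:
  fixes \<pi> :: "'a::comm_ring_1"
  assumes "\<not> \<pi> dvd 1" and "\<pi> dvd of_nat p" and "prime p" and "\<not> p dvd m"
  shows "\<not> \<pi> dvd of_nat m"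
proof
  assume "\<pi> dvd of_nat m"
  have "coprime p m" using assms(3,4) prime_imp_coprime by blast
  then have "gcd (int p) (int m) = 1" by simp
  then obtain a b where "a * int p + b * int m = 1" using bezout_int by metis
  then have "(of_int (a * int p + b * int m) :: 'a) = 1" by simp
  then have "of_int a * of_nat p + of_int b * of_nat m = (1 :: 'a)" by simp
  moreover have "\<pi> dvd of_int a * of_nat p + of_int b * of_nat m"
    using assms(2) \<open>\<pi> dvd of_nat m\<close> by simp
  ultimately have "\<pi> dvd 1" by simp
  with assms(1) show False ..
qed

lemma dvr_geometric_sum_unit:
  fixes \<pi> b :: "'a::idom"
  assumes "dvr_uniformizer \<pi>" and "\<pi> dvd b - 1" and "\<not> \<pi> dvd of_nat m"
  shows "(\<Sum>j<m. b ^ j) dvd 1"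
proof -
  have "\<pi> dvd b ^ j - 1" for j
    using assms(2) power_diff_1_eq[of b j] by (metis dvd_mult2)
  then have "\<pi> dvd (\<Sum>j<m. b ^ j - 1)" by (simp add: dvd_sum)
  then have "\<pi> dvd (\<Sum>j<m. b ^ j) - of_nat m" by (simp add: sum_subtractf)
  then have "\<not> \<pi> dvd (\<Sum>j<m. b ^ j)"
    using assms(3) dvd_diff[of \<pi> "\<Sum>j<m. b ^ j" "(\<Sum>j<m. b ^ j) - of_nat m"] by auto
  then show ?thesis using dvr_unit_iff_not_dvd[OF assms(1)] by blast
qed

lemma pi_level_multiplicity_dvd:
  fixes \<pi> a :: "'a::comm_ring_1"
  assumes "prime p" and "\<pi> ^ e dvd of_nat p" and "\<pi> dvd a - 1"
  shows "\<pi> ^ pi_level p e (multiplicity p n) dvd a ^ n - 1"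
proof -
  define v where "v = multiplicity p n"
  obtain m where n: "n = p ^ v * m" using multiplicity_dvd unfolding v_def by blast
  have "\<pi> ^ pi_level p e v dvd a ^ (p ^ v) - 1"
    using pi_level_dvd[OF assms] by simp
  also have "a ^ (p ^ v) - 1 dvd a ^ n - 1"
    unfolding n power_mult power_diff_1_eq[of "a ^ p ^ v" m] by simp
  finally show ?thesis unfolding v_def .
qed

lemma dvr_one_plus_uniformizer_power_minus_one_dvd:
  fixes \<pi> u :: "'a::idom"
  assumes "dvr_uniformizer \<pi>" and "prime p" and "of_nat p = u * \<pi> ^ e" and "u dvd 1" and "e > 0"
    and no_tie: "\<And>k. p * pi_level p e k \<noteq> e + pi_level p e k" and "n > 0"
  shows "(1 + \<pi>) ^ n - 1 dvd \<pi> ^ pi_level p e (multiplicity p n)"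
proof -
  define v where "v = multiplicity p n"
  define i where "i = pi_level p e v"
  obtain m where n: "n = p ^ v * m" and "\<not> p dvd m"
    using multiplicity_decompose'[of n p] assms(2,7) unfolding v_def by (metis not_prime_unit neq0_conv)
  have "\<pi> dvd of_nat p" using assms(3,5) by (simp add: dvd_power)
  then have "\<not> \<pi> dvd of_nat m"
    using assms(1,2) \<open>\<not> p dvd m\<close> not_dvd_of_nat_if_prime_not_dvd
    unfolding dvr_uniformizer_def by blast
  obtain w where "w dvd 1" and w: "(1 + \<pi>) ^ (p ^ v) - 1 = w * \<pi> ^ i"
    using dvr_pi_level_exact[OF assms(1-4) no_tie] unfolding i_def by blast
  define b where "b = (1 + \<pi>) ^ (p ^ v)"
  have "i > 0" unfolding i_def using pi_level_pos prime_gt_0_nat[OF assms(2)] by blast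
  then have "\<pi> dvd b - 1" unfolding b_def w by (simp add: dvd_power)
  have "(1 + \<pi>) ^ n - 1 = (b - 1) * (\<Sum>j<m. b ^ j)"
    unfolding n b_def power_mult by (rule power_diff_1_eq)
  also have "\<dots> = (w * (\<Sum>j<m. b ^ j)) * \<pi> ^ i"
    unfolding b_def w by (simp add: algebra_simps)
  finally have generator: "(1 + \<pi>) ^ n - 1 = (w * (\<Sum>j<m. b ^ j)) * \<pi> ^ i" .
  have "(w * (\<Sum>j<m. b ^ j)) dvd 1"
    using \<open>w dvd 1\<close> dvr_geometric_sum_unit[OF assms(1) \<open>\<pi> dvd b - 1\<close> \<open>\<not> \<pi> dvd of_nat m\<close>]
    by (metis mult_dvd_mono mult_1_left)
  then obtain k where "(w * (\<Sum>j<m. b ^ j)) * k = 1" by (metis dvdE)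
  then have "\<pi> ^ i = ((1 + \<pi>) ^ n - 1) * k"
    unfolding generator by (metis mult.commute mult.left_commute mult_1_right)
  then show ?thesis unfolding i_def v_def by simp
qed

lemma I_ideal_eq_genideal_pi_level:
  fixes \<pi> u :: "'a::idom"
  assumes "dvr_uniformizer \<pi>" and "prime p" and "of_nat p = u * \<pi> ^ e" and "u dvd 1" and "e > 0"
    and "\<And>k. p * pi_level p e k \<noteq> e + pi_level p e k" and "n > 0"
  shows "I_ideal \<pi> n = genideal type_ring {\<pi> ^ pi_level p e (multiplicity p n)}"
  unfolding I_ideal_def
proof (rule genideal_type_ring_eq_principal)
  show "(1 + \<pi>) ^ n - 1 \<in> {a ^ n - 1 |a. \<pi> dvd a - 1}" by auto
  show "(1 + \<pi>) ^ n - 1 dvd \<pi> ^ pi_level p e (multiplicity p n)"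
    by (rule dvr_one_plus_uniformizer_power_minus_one_dvd[OF assms])
  have "\<pi> ^ e dvd of_nat p" using assms(3) by simp
  then show "\<pi> ^ pi_level p e (multiplicity p n) dvd s" if "s \<in> {a ^ n - 1 |a. \<pi> dvd a - 1}" for s
    using that pi_level_multiplicity_dvd[OF assms(2)] by blast
qed

theorem mainTheorem15:
  fixes \<pi> u :: "'a::{idom, ring_char_0}" and p e n :: nat
  assumes "prime p"
    and "dvr_uniformizer \<pi>"
    and "pi_adically_complete \<pi>"
    and "finite_residue_field \<pi>"
    and "u dvd 1" and "(of_nat p :: 'a) = u * \<pi> ^ e" and "e > 0"
    and "log (real p) (real e / (real p - 1)) \<notin> \<int>"
    and "n > 0"
  shows "let c = ceiling (log (real p) (real e / (real p - 1)));
             v = multiplicity p n;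
             i = (if c \<le> int v then nat (int e * (int v - c)) + p ^ nat c else p ^ v)
         in type_ring Quot (I_ideal \<pi> n) \<simeq> type_ring Quot (genideal type_ring {\<pi> ^ i})"
proof -
  define c where "c = \<lceil>log (real p) (real e / (real p - 1))\<rceil>"
  define v where "v = multiplicity p n"
  have "p \<ge> 2" using assms(1) prime_ge_2_nat by blast
  note bounds = ceiling_log_bounds[OF \<open>p \<ge> 2\<close> assms(7,8), folded c_def]
  have "pi_level p e v = (if c \<le> int v then nat (int e * (int v - c)) + p ^ nat c else p ^ v)"
  proof (cases "c \<le> int v")
    case True
    then have "nat c \<le> v" and "nat (int e * (int v - c)) = e * (v - nat c)"
      using bounds(1) by (auto simp: nat_mult_distrib nat_diff_distrib)
    then show ?thesis
      using True pi_level_closed_form[OF \<open>p \<ge> 2\<close> bounds(2,3), of v] by (cases "v = nat c") auto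
  next
    case False
    then show ?thesis using pi_level_closed_form[OF \<open>p \<ge> 2\<close> bounds(2,3), of v] by auto
  qed
  moreover have "I_ideal \<pi> n = genideal type_ring {\<pi> ^ pi_level p e v}"
    unfolding v_def using pi_level_no_tie[OF \<open>p \<ge> 2\<close> bounds(2,3)]
    by (rule I_ideal_eq_genideal_pi_level[OF assms(2,1,6,5,7) _ assms(9)])
  ultimately show ?thesis
    unfolding Let_def c_def[symmetric] v_def[symmetric] by (simp add: ring_iso_refl)
qed

end
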